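(* Let $C\subseteq\{0,1\}^n$ be shortest-path closed and let $v\in C$ be a corner vertex of $C$. Then $C\setminus\{v\}$ is shortest-path closed.
   Context: For $C\subseteq\{0,1\}^n$, the one-inclusion graph $\Gamma(C)$ has vertex set $C$ and an edge between $u,v$ iff they differ in exactly one coordinate. A $k$-cube in $C$ is a set of $2^k$ points of $C$ agreeing outside some set of $k$ coordinates and taking all $2^k$ values on those coordinates. $C$ is shortest-path closed if for any $u,v\in C$, $\Gamma(C)$ contains a path from $u$ to $v$ of length $\|u-v\|_1$ (the Hamming distance). A vertex $v\in C$ is a corner vertex of $C$ if among all cubes contained in $C$ that contain $v$ there is a unique one $Q$ of maximum dimension, and all neighbours of $v$ in $\Gamma(C)$ lie in $Q$. *)

theory Defs
  imports Main
begin

text \<open>Points of the hypercube {0,1}^n are represented by their supports: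
  a point x is a set x \<subseteq> {0..<n} (coordinate i is 1 iff i \<in> x).\<close>

definition hamming :: "nat set \<Rightarrow> nat set \<Rightarrow> nat" where
  "hamming u v = card ((u - v) \<union> (v - u))"

definition adjacent :: "nat set \<Rightarrow> nat set \<Rightarrow> bool" where
  "adjacent u v \<longleftrightarrow> hamming u v = 1"

text \<open>A path in the one-inclusion graph of C from u to v of length (length ps - 1).\<close>
definition is_path :: "nat set set \<Rightarrow> nat set list \<Rightarrow> nat set \<Rightarrow> nat set \<Rightarrow> bool" where
  "is_path C ps u v \<longleftrightarrow> ps \<noteq> [] \<and> hd ps = u \<and> last ps = v \<and> set ps \<subseteq> C \<and>
     (\<forall>i. Suc i < length ps \<longrightarrow> adjacent (ps ! i) (ps ! Suc i))"

definition sp_closed :: "nat set set \<Rightarrow> bool" where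
  "sp_closed C \<longleftrightarrow> (\<forall>u\<in>C. \<forall>v\<in>C. \<exists>ps. is_path C ps u v \<and> length ps = hamming u v + 1)"

text \<open>Q is a k-cube of {0,1}^n: agrees outside a set S of k coordinates (S \<subseteq> {0..<n})
  and takes all 2^k values on S.\<close>
definition is_cube :: "nat \<Rightarrow> nat set set \<Rightarrow> nat \<Rightarrow> bool" where
  "is_cube n Q k \<longleftrightarrow> (\<exists>S b. S \<subseteq> {0..<n} \<and> card S = k \<and> b \<subseteq> {0..<n} \<and>
     Q = {x. x \<subseteq> {0..<n} \<and> x - S = b - S})"

definition corner_vertex :: "nat \<Rightarrow> nat set set \<Rightarrow> nat set \<Rightarrow> bool" where
  "corner_vertex n C v \<longleftrightarrow> v \<in> C \<and>
     (\<exists>Q k. is_cube n Q k \<and> Q \<subseteq> C \<and> v \<in> Q \<and>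
        (\<forall>Q' k'. is_cube n Q' k' \<and> Q' \<subseteq> C \<and> v \<in> Q' \<longrightarrow> k' \<le> k \<and> (k' = k \<longrightarrow> Q' = Q)) \<and>
        (\<forall>u\<in>C. adjacent v u \<longrightarrow> u \<in> Q))"

end

theory Submission
  imports Defs
begin

text \<open>Let a geodesic of C run through v, with neighbours a and b on it. Both are neighbours
  of v in C, hence lie in the cube Q at the corner v; they differ from v in two distinct
  directions i and j of Q. So the fourth vertex of the square spanned by a, v, b also lies in
  Q \<subseteq> C, and putting it in place of v gives a geodesic of the same length avoiding v.\<close>

definition toggle :: "nat \<Rightarrow> nat set \<Rightarrow> nat set" where
  "toggle i x = (x - {i}) \<union> ({i} - x)"

lemma toggle_toggle_neq: "i \<noteq> j \<Longrightarrow> toggle i (toggle j x) \<noteq> x"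
  unfolding toggle_def by blast

lemma toggle_Diff_eq_iff: "toggle i x - S = x - S \<longleftrightarrow> i \<in> S"
  unfolding toggle_def by auto

lemma toggle_subset: "x \<subseteq> X \<Longrightarrow> i \<in> X \<Longrightarrow> toggle i x \<subseteq> X"
  unfolding toggle_def by auto

lemma hamming_sym: "hamming x y = hamming y x"
  unfolding hamming_def by (simp add: Un_commute)

lemma hamming_self [simp]: "hamming x x = 0"
  unfolding hamming_def by simp

lemma hamming_triangle:
  assumes "finite x" "finite y" "finite z"
  shows "hamming x z \<le> hamming x y + hamming y z"
proof -
  have "hamming x z \<le> card ((x - y) \<union> (y - x) \<union> ((y - z) \<union> (z - y)))"
    unfolding hamming_def by (rule card_mono) (use assms in auto)
  also have "\<dots> \<le> hamming x y + hamming y z"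
    unfolding hamming_def by (rule card_Un_le)
  finally show ?thesis .
qed

lemma adjacent_iff_toggle: "adjacent x y \<longleftrightarrow> (\<exists>i. y = toggle i x)"
proof
  assume "adjacent x y"
  then obtain i where "(x - y) \<union> (y - x) = {i}"
    unfolding adjacent_def hamming_def by (auto simp: card_1_singleton_iff)
  then have "y = toggle i x"
    unfolding toggle_def by blast
  then show "\<exists>i. y = toggle i x" ..
next
  assume "\<exists>i. y = toggle i x"
  then obtain i where "y = toggle i x" ..
  then have "(x - y) \<union> (y - x) = {i}"
    unfolding toggle_def by blast
  then show "adjacent x y"
    unfolding adjacent_def hamming_def by simp
qed

lemma adjacent_sym: "adjacent x y \<longleftrightarrow> adjacent y x"
  unfolding adjacent_def by (simp add: hamming_sym)

lemma is_path_nth: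
  assumes "is_path C ps u w"
  shows "ps ! 0 = u" "ps ! (length ps - 1) = w" "\<And>m. m < length ps \<Longrightarrow> ps ! m \<in> C"
    and "u \<in> C" "w \<in> C"
  using assms unfolding is_path_def by (auto simp: hd_conv_nth last_conv_nth)

lemma is_path_adjacent:
  "is_path C ps u w \<Longrightarrow> Suc m < length ps \<Longrightarrow> adjacent (ps ! m) (ps ! Suc m)"
  unfolding is_path_def by blast

lemma is_path_hamming_nth_le:
  assumes "is_path C ps u w" "\<forall>x\<in>C. finite x" "i \<le> j" "j < length ps"
  shows "hamming (ps ! i) (ps ! j) \<le> j - i"
  using assms(3,4)
proof (induction j)
  case 0
  then show ?case by simp
next
  case (Suc j)
  show ?case
  proof (cases "i = Suc j")
    case False
    with Suc.prems have "hamming (ps ! i) (ps ! j) \<le> j - i"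
      by (intro Suc.IH) auto
    moreover have "hamming (ps ! j) (ps ! Suc j) = 1"
      using is_path_adjacent[OF assms(1)] Suc.prems unfolding adjacent_def by simp
    moreover have "hamming (ps ! i) (ps ! Suc j) \<le> hamming (ps ! i) (ps ! j) + hamming (ps ! j) (ps ! Suc j)"
      using Suc.prems False assms(2) is_path_nth(3)[OF assms(1)]
      by (intro hamming_triangle) auto
    ultimately show ?thesis
      using Suc.prems False by linarith
  qed simp
qed

lemma geodesic_hamming_nth:
  assumes "is_path C ps u w" "\<forall>x\<in>C. finite x" "length ps = hamming u w + 1"
    and "i \<le> j" "j < length ps"
  shows "hamming (ps ! i) (ps ! j) = j - i"
proof -
  let ?l = "length ps - 1"
  have fin: "\<And>m. m < length ps \<Longrightarrow> finite (ps ! m)"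
    using assms(2) is_path_nth(3)[OF assms(1)] by blast
  have "finite u" "finite w"
    using assms(2) is_path_nth(4,5)[OF assms(1)] by auto
  have "hamming u w \<le> hamming u (ps ! i) + hamming (ps ! i) w"
    using fin assms(4,5) \<open>finite u\<close> \<open>finite w\<close> by (intro hamming_triangle) auto
  also have "\<dots> \<le> hamming u (ps ! i) + hamming (ps ! i) (ps ! j) + hamming (ps ! j) w"
    using fin assms(4,5) \<open>finite w\<close> hamming_triangle[of "ps ! i" "ps ! j" w] by auto
  finally have "hamming u w \<le> hamming u (ps ! i) + hamming (ps ! i) (ps ! j) + hamming (ps ! j) w" .
  moreover have "hamming u (ps ! i) \<le> i" "hamming (ps ! j) w \<le> ?l - j"
    using is_path_hamming_nth_le[OF assms(1,2), of 0 i] is_path_hamming_nth_le[OF assms(1,2), of j ?l]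
      is_path_nth(1,2)[OF assms(1)] assms(4,5) by auto
  moreover have "hamming (ps ! i) (ps ! j) \<le> j - i"
    using is_path_hamming_nth_le[OF assms(1,2,4,5)] .
  ultimately show ?thesis
    using assms(3,4,5) by linarith
qed

lemma geodesic_distinct:
  assumes "is_path C ps u w" "\<forall>x\<in>C. finite x" "length ps = hamming u w + 1"
  shows "distinct ps"
  unfolding distinct_conv_nth
proof (intro allI impI)
  fix i j assume ij: "i < length ps" "j < length ps" "i \<noteq> j"
  consider "i < j" | "j < i"
    using ij(3) by linarith
  then show "ps ! i \<noteq> ps ! j"
  proof cases
    case 1
    then have "hamming (ps ! i) (ps ! j) = j - i"
      using ij by (intro geodesic_hamming_nth[OF assms]) auto
    with 1 show ?thesis by auto
  next
    case 2
    then have "hamming (ps ! j) (ps ! i) = i - j"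
      using ij by (intro geodesic_hamming_nth[OF assms]) auto
    with 2 show ?thesis by auto
  qed
qed

lemma is_path_mono:
  "is_path C ps u w \<Longrightarrow> set ps \<subseteq> D \<Longrightarrow> is_path D ps u w"
  unfolding is_path_def by blast

lemma is_path_list_update:
  assumes "is_path C ps u w" "0 < k" "Suc k < length ps" "x \<in> C"
    and "adjacent (ps ! (k - 1)) x" "adjacent x (ps ! Suc k)"
  shows "is_path C (ps[k := x]) u w"
  unfolding is_path_def
proof (intro conjI allI impI)
  show "ps[k := x] \<noteq> []" "hd (ps[k := x]) = u" "last (ps[k := x]) = w"
    using assms(1-3) unfolding is_path_def by (auto simp: hd_conv_nth last_conv_nth nth_list_update)
  show "set (ps[k := x]) \<subseteq> C"
    using assms(1,4) set_update_subset_insert[of ps k x] unfolding is_path_def by blast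
next
  fix m assume m: "Suc m < length (ps[k := x])"
  consider "m = k" | "Suc m = k" | "m \<noteq> k" "Suc m \<noteq> k" by blast
  then show "adjacent (ps[k := x] ! m) (ps[k := x] ! Suc m)"
  proof cases
    case 1
    with m assms(6) show ?thesis by simp
  next
    case 2
    then have "m = k - 1" by simp
    with 2 m assms(5) show ?thesis by simp
  next
    case 3
    with m is_path_adjacent[OF assms(1)] show ?thesis by simp
  qed
qed

lemma cube_toggle_square:
  assumes "is_cube n Q d" "v \<in> Q" "toggle i v \<in> Q" "toggle j v \<in> Q"
  shows "toggle j (toggle i v) \<in> Q"
proof -
  obtain S c where S: "S \<subseteq> {0..<n}" and Q: "Q = {x. x \<subseteq> {0..<n} \<and> x - S = c - S}"
    using assms(1) unfolding is_cube_def by blast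
  have "i \<in> S" "j \<in> S"
    using assms(2-4) toggle_Diff_eq_iff[of _ v S] unfolding Q by auto
  then have "toggle j (toggle i v) - S = v - S"
    using toggle_Diff_eq_iff[of j "toggle i v" S] toggle_Diff_eq_iff[of i v S] by simp
  moreover have "v \<subseteq> {0..<n}"
    using assms(2) unfolding Q by simp
  then have "toggle j (toggle i v) \<subseteq> {0..<n}"
    using S \<open>i \<in> S\<close> \<open>j \<in> S\<close> by (meson subsetD toggle_subset)
  ultimately show ?thesis
    using assms(2) unfolding Q by simp
qed

lemma geodesic_reroute:
  assumes path: "is_path C ps u w" and fin: "\<forall>x\<in>C. finite x"
    and len: "length ps = hamming u w + 1"
    and k: "0 < k" "Suc k < length ps" "ps ! k = v"
    and Q: "is_cube n Q d" "Q \<subseteq> C" "v \<in> Q" "\<forall>x\<in>C. adjacent v x \<longrightarrow> x \<in> Q"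
  shows "\<exists>qs. is_path (C - {v}) qs u w \<and> length qs = length ps"
proof -
  define a where "a = ps ! (k - 1)"
  define b where "b = ps ! Suc k"
  have "adjacent a v" "adjacent v b"
    using is_path_adjacent[OF path, of "k - 1"] is_path_adjacent[OF path, of k] k
    unfolding a_def b_def by simp_all
  then have "adjacent v a"
    by (simp add: adjacent_sym)
  then obtain i where a: "a = toggle i v"
    unfolding adjacent_iff_toggle ..
  obtain j where b: "b = toggle j v"
    using \<open>adjacent v b\<close> unfolding adjacent_iff_toggle ..
  have dist: "distinct ps"
    using path fin len by (rule geodesic_distinct)
  have "a \<noteq> b"
    using k nth_eq_iff_index_eq[OF dist, of "k - 1" "Suc k"] unfolding a_def b_def by simp
  then have "i \<noteq> j"
    using a b by blast
  have "a \<in> Q" "b \<in> Q"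
    using Q(4) \<open>adjacent v b\<close> \<open>adjacent a v\<close> is_path_nth(3)[OF path] k
    unfolding a_def b_def by (auto simp: adjacent_sym)
  define v' where "v' = toggle j a"
  have "v' \<in> C"
    using cube_toggle_square[OF Q(1,3)] \<open>a \<in> Q\<close> \<open>b \<in> Q\<close> Q(2)
    unfolding v'_def a b by blast
  have "v' \<noteq> v"
    using toggle_toggle_neq[OF \<open>i \<noteq> j\<close>[symmetric]] unfolding v'_def a by blast
  have "b = toggle i v'"
    unfolding v'_def a b toggle_def by blast
  then have "adjacent a v'" "adjacent v' b"
    unfolding adjacent_iff_toggle v'_def by blast+
  then have "is_path C (ps[k := v']) u w"
    using is_path_list_update[OF path k(1,2) \<open>v' \<in> C\<close>] unfolding a_def b_def by blast
  moreover have "v \<notin> set (ps[k := v'])"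
    using set_update_distinct[OF dist] k \<open>v' \<noteq> v\<close> by auto
  ultimately have "is_path (C - {v}) (ps[k := v']) u w"
    by (auto intro: is_path_mono simp: is_path_def)
  then show ?thesis by auto
qed

theorem lemma3:
  fixes n :: nat and C :: "nat set set" and v :: "nat set"
  assumes "C \<subseteq> Pow {0..<n}"
    and "sp_closed C"
    and "corner_vertex n C v"
  shows "sp_closed (C - {v})"
  unfolding sp_closed_def
proof (intro ballI)
  fix u w assume u: "u \<in> C - {v}" and w: "w \<in> C - {v}"
  have fin: "\<forall>x\<in>C. finite x"
    using assms(1) finite_subset by blast
  obtain ps where path: "is_path C ps u w" and len: "length ps = hamming u w + 1"
    using assms(2) u w unfolding sp_closed_def by blast
  obtain Q d where Q: "is_cube n Q d" "Q \<subseteq> C" "v \<in> Q" "\<forall>x\<in>C. adjacent v x \<longrightarrow> x \<in> Q"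
    using assms(3) unfolding corner_vertex_def by blast
  show "\<exists>qs. is_path (C - {v}) qs u w \<and> length qs = hamming u w + 1"
  proof (cases "v \<in> set ps")
    case False
    then have "set ps \<subseteq> C - {v}"
      using path unfolding is_path_def by blast
    with is_path_mono[OF path] len show ?thesis by blast
  next
    case True
    then obtain k where k: "k < length ps" "ps ! k = v"
      by (auto simp: in_set_conv_nth)
    moreover have "k \<noteq> 0" "k \<noteq> length ps - 1"
      using k u w is_path_nth(1,2)[OF path] by auto
    ultimately have "0 < k" "Suc k < length ps"
      by auto
    with geodesic_reroute[OF path fin len _ _ k(2) Q] len show ?thesis
      by auto
  qed
qed

end
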